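(* Let $n\geq 2$ and let $R$ be the unital associative ring $\langle x,y \mid x^n=0,\ y^n=0,\ xy+y^{n-1}x^{n-1}=1\rangle$. For $0\leq i,j<n$ put $a_{i,j}=y^ix^j-y^{i+1}x^{j+1}\in R$. Then for all $0\leq i,j,p,q<n$ we have $a_{i,j}a_{p,q}=0$ if $j\neq p$ and $a_{i,j}a_{p,q}=a_{i,q}$ if $j=p$. Moreover $$1=\sum_{i=0}^{n-1}a_{i,i},\qquad x=\sum_{i=0}^{n-2}a_{i,i+1},\qquad y=\sum_{i=0}^{n-2}a_{i+1,i}.$$
   Context: $R$ denotes the quotient of the free unital associative ring $\mathbb{Z}\langle x,y\rangle$ by the two-sided ideal generated by $x^n$, $y^n$ and $xy+y^{n-1}x^{n-1}-1$; $x^0=y^0=1$. *)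

theory Defs
  imports Main
begin

definition aij :: "'a::ring_1 \<Rightarrow> 'a \<Rightarrow> nat \<Rightarrow> nat \<Rightarrow> 'a" where
  "aij x y i j = y ^ i * x ^ j - y ^ (i + 1) * x ^ (j + 1)"

end

theory Submission
  imports Defs
begin

text \<open>
  Put \<open>m = n - 1\<close>, so the relation reads \<open>x y = 1 - y\<^sup>m x\<^sup>m\<close>, and let \<open>f = 1 - y x\<close>.
  The nilpotency of \<open>x\<close> and \<open>y\<close> gives \<open>x f = 0 = f y\<close>, hence \<open>f\<^sup>2 = f\<close>, and
  \<open>a\<^sub>i\<^sub>j = y\<^sup>i f x\<^sup>j\<close>. The matrix-unit relations then reduce to
  \<open>f x\<^sup>j y\<^sup>p f = \<delta>\<^sub>j\<^sub>p f\<close> for \<open>j, p \<le> m\<close>, which follows by peeling off one factor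
  \<open>x y = 1 - y\<^sup>m x\<^sup>m\<close> at a time: the correction term always contains \<open>f x\<^sup>a y\<^sup>m\<close> with
  \<open>a < m\<close> or \<open>x\<^sup>m y\<^sup>b f\<close> with \<open>b < m\<close>, which vanish by induction.
  The three sum formulas are telescoping sums.
\<close>

lemma aij_eq: "aij x y i j = y ^ i * (1 - y * x) * x ^ j"
proof -
  have "y ^ i * (1 - y * x) * x ^ j = y ^ i * x ^ j - (y ^ i * y) * (x * x ^ j)"
    by (simp add: algebra_simps)
  then show ?thesis
    by (simp only: aij_def power_Suc2[of y, symmetric] power_Suc[of x, symmetric] Suc_eq_plus1)
qed

lemma sum_aij_diag: "(\<Sum>i = 0..k. aij x y i i) = 1 - y ^ Suc k * x ^ Suc k"
  using sum_telescope[of "\<lambda>i. y ^ i * x ^ i" k] by (simp add: aij_def atLeast0AtMost)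

lemma sum_aij_superdiag:
  "(\<Sum>i = 0..k. aij x y i (i + 1)) = x - y ^ Suc k * x ^ Suc (Suc k)"
  using sum_telescope[of "\<lambda>i. y ^ i * x ^ Suc i" k] by (simp add: aij_def atLeast0AtMost)

lemma sum_aij_subdiag:
  "(\<Sum>i = 0..k. aij x y (i + 1) i) = y - y ^ Suc (Suc k) * x ^ Suc k"
  using sum_telescope[of "\<lambda>i. y ^ Suc i * x ^ i" k] by (simp add: aij_def atLeast0AtMost)

lemma power_mult_power_eq_zero_left:
  fixes x y f :: "'a::ring_1"
  assumes fy: "f * y = 0" and xy: "x * y = 1 - y ^ m * x ^ m"
  shows "a < b \<Longrightarrow> b \<le> m \<Longrightarrow> f * x ^ a * y ^ b = 0"
proof (induction a arbitrary: b)
  case 0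
  then obtain c where b: "b = Suc c" by (cases b) auto
  show ?case using fy by (simp add: b mult.assoc[symmetric])
next
  case (Suc a)
  then obtain c where b: "b = Suc c" by (cases b) auto
  have "f * x ^ Suc a * y ^ b = f * x ^ a * (x * y) * y ^ c"
    by (simp only: b power_Suc2[of x] power_Suc[of y] mult.assoc)
  also have "\<dots> = f * x ^ a * y ^ c - (f * x ^ a * y ^ m) * x ^ m * y ^ c"
    by (simp add: xy algebra_simps)
  also have "f * x ^ a * y ^ c = 0" using Suc b by auto
  also have "f * x ^ a * y ^ m = 0" using Suc b by auto
  finally show ?case by simp
qed

lemma power_mult_power_eq_zero_right:
  fixes x y f :: "'a::ring_1"
  assumes xf: "x * f = 0" and xy: "x * y = 1 - y ^ m * x ^ m"
  shows "b < a \<Longrightarrow> a \<le> m \<Longrightarrow> x ^ a * y ^ b * f = 0"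
proof (induction b arbitrary: a)
  case 0
  then obtain c where a: "a = Suc c" by (cases a) auto
  show ?case using xf by (simp add: a power_Suc2 mult.assoc del: power_Suc)
next
  case (Suc b)
  then obtain c where a: "a = Suc c" by (cases a) auto
  have "x ^ a * y ^ Suc b * f = x ^ c * (x * y) * y ^ b * f"
    by (simp only: a power_Suc2[of x] power_Suc[of y] mult.assoc)
  also have "\<dots> = x ^ c * y ^ b * f - x ^ c * y ^ m * (x ^ m * y ^ b * f)"
    by (simp add: xy algebra_simps)
  also have "x ^ c * y ^ b * f = 0" using Suc a by auto
  also have "x ^ m * y ^ b * f = 0" using Suc a by auto
  finally show ?case by simp
qed

lemma power_mult_power_diag:
  fixes x y f :: "'a::ring_1"
  assumes fy: "f * y = 0" and xy: "x * y = 1 - y ^ m * x ^ m"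
  shows "j \<le> m \<Longrightarrow> f * x ^ j * y ^ j = f"
proof (induction j)
  case 0
  then show ?case by simp
next
  case (Suc j)
  have "f * x ^ Suc j * y ^ Suc j = f * x ^ j * (x * y) * y ^ j"
    by (simp only: power_Suc2[of x] power_Suc[of y] mult.assoc)
  also have "\<dots> = f * x ^ j * y ^ j - (f * x ^ j * y ^ m) * x ^ m * y ^ j"
    by (simp add: xy algebra_simps)
  also have "f * x ^ j * y ^ m = 0"
    using power_mult_power_eq_zero_left[OF fy xy, of j m] Suc by auto
  finally show ?case using Suc by simp
qed

lemma aij_mult_aij:
  fixes x y :: "'a::ring_1"
  assumes x: "x ^ Suc m = 0" and y: "y ^ Suc m = 0"
    and xy: "x * y = 1 - y ^ m * x ^ m"
    and "j \<le> m" "p \<le> m"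
  shows "aij x y i j * aij x y p q = (if j = p then aij x y i q else 0)"
proof -
  define f where "f = 1 - y * x"
  have xf: "x * f = 0"
  proof -
    have "x * f = x - (x * y) * x" by (simp add: f_def algebra_simps)
    also have "\<dots> = y ^ m * (x ^ m * x)" by (simp add: xy algebra_simps)
    finally have "x * f = y ^ m * (x ^ m * x)" .
    then show ?thesis using x by (simp add: power_Suc2[symmetric] del: power_Suc)
  qed
  have fy: "f * y = 0"
  proof -
    have "f * y = y - y * (x * y)" by (simp add: f_def algebra_simps)
    also have "\<dots> = (y * y ^ m) * x ^ m" by (simp add: xy algebra_simps)
    finally have "f * y = (y * y ^ m) * x ^ m" .
    then show ?thesis using y by simp
  qed
  have ff: "f * f = f"
  proof -
    have "f * f = f - (f * y) * x" by (simp add: f_def algebra_simps)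
    then show ?thesis using fy by simp
  qed
  have "f * x ^ j * y ^ p * f = (if j = p then f else 0)"
  proof (cases j p rule: linorder_cases)
    case less
    then show ?thesis using power_mult_power_eq_zero_left[OF fy xy, of j p] \<open>p \<le> m\<close> by simp
  next
    case equal
    then show ?thesis using power_mult_power_diag[OF fy xy, of j] \<open>j \<le> m\<close> ff by simp
  next
    case greater
    then show ?thesis
      using power_mult_power_eq_zero_right[OF xf xy, of p j] \<open>j \<le> m\<close> by (simp add: mult.assoc)
  qed
  moreover have "aij x y i j * aij x y p q = y ^ i * (f * x ^ j * y ^ p * f) * x ^ q"
    by (simp add: aij_eq f_def mult.assoc)
  ultimately show ?thesis by (simp add: aij_eq f_def)
qed

theorem lemma4:
  fixes x y :: "'a::ring_1" and n :: nat
  assumes n2: "n \<ge> 2"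
    and hx: "x ^ n = 0" and hy: "y ^ n = 0"
    and hxy: "x * y + y ^ (n - 1) * x ^ (n - 1) = 1"
  shows "(\<forall>i<n. \<forall>j<n. \<forall>p<n. \<forall>q<n.
            aij x y i j * aij x y p q = (if j = p then aij x y i q else 0))
       \<and> 1 = (\<Sum>i = 0..n-1. aij x y i i)
       \<and> x = (\<Sum>i = 0..n-2. aij x y i (i + 1))
       \<and> y = (\<Sum>i = 0..n-2. aij x y (i + 1) i)"
proof -
  obtain k where n: "n = Suc (Suc k)" using n2 by (metis add_2_eq_Suc le_Suc_ex)
  have xy: "x * y = 1 - y ^ Suc k * x ^ Suc k" using hxy by (simp add: n eq_diff_eq)
  have "aij x y i j * aij x y p q = (if j = p then aij x y i q else 0)"
    if "j < n" "p < n" for i j p q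
    using aij_mult_aij[of x "Suc k" y] hx hy xy that by (simp add: n)
  moreover have "(\<Sum>i = 0..n-1. aij x y i i) = 1"
    using sum_aij_diag[of x y "Suc k"] hx by (simp add: n)
  moreover have "(\<Sum>i = 0..n-2. aij x y i (i + 1)) = x"
    using sum_aij_superdiag[of x y k] hx by (simp add: n)
  moreover have "(\<Sum>i = 0..n-2. aij x y (i + 1) i) = y"
    using sum_aij_subdiag[of x y k] hy by (simp add: n)
  ultimately show ?thesis by simp
qed

end
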